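(* For $n\ge1$ let $G_n$ be the number of domino tilings of $C_4\times P_n$. Let $g_n$ be the number of domino tilings of the graph obtained from $C_4\times P_n$ by deleting two adjacent vertices of the end copy $C_4\times\{1\}$, together with their incident edges. Then $$G_n=2G_{n-1}+G_{n-2}+4g_{n-1}\quad(n\ge3),\qquad g_n=G_{n-1}+g_{n-1}\quad(n\ge2).$$ Both sequences satisfy $x_n=3x_{n-1}+3x_{n-2}-x_{n-3}$ for $n\ge4$. For all $n\ge1$, $$g_n=\frac1{12}\Big[(1+\sqrt3)(2+\sqrt3)^n+(1-\sqrt3)(2-\sqrt3)^n\Big]-\frac16(-1)^n .$$
   Context: $H\times K$ denotes the Cartesian product of graphs. $P_n$ is the path with vertex set $\{1,\dots,n\}$ and $C_4$ is the $4$-cycle. For a graph $H$, the subgraph $H\times\{1\}$ of $H\times P_n$ is called its end copy. A domino tiling of a finite graph is a perfect matching, and "number of domino tilings" means the number of perfect matchings. *)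

theory Defs
  imports "HOL-Analysis.Analysis"
begin

type_synonym 'a graph = "'a set \<times> ('a \<Rightarrow> 'a \<Rightarrow> bool)"

definition verts :: "'a graph \<Rightarrow> 'a set" where "verts G = fst G"

definition edges :: "'a graph \<Rightarrow> 'a set set" where
  "edges G = {{u, v} | u v. u \<in> fst G \<and> v \<in> fst G \<and> u \<noteq> v \<and> snd G u v}"

text \<open>Perfect matching = domino tiling.\<close>
definition perfect_matching :: "'a graph \<Rightarrow> 'a set set \<Rightarrow> bool" where
  "perfect_matching G M \<longleftrightarrow> M \<subseteq> edges G \<and> (\<forall>v\<in>verts G. \<exists>!e. e \<in> M \<and> v \<in> e)"

definition num_tilings :: "'a graph \<Rightarrow> nat" where
  "num_tilings G = card {M. perfect_matching G M}"

definition cart_prod :: "'a graph \<Rightarrow> 'b graph \<Rightarrow> ('a \<times> 'b) graph" where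
  "cart_prod G H = (verts G \<times> verts H,
     \<lambda>(a, b) (a', b'). (snd G a a' \<and> b = b') \<or> (a = a' \<and> snd H b b'))"

definition C4 :: "nat graph" where
  "C4 = ({0..<4}, \<lambda>a b. (a + 1) mod 4 = b \<or> (b + 1) mod 4 = a)"

definition path :: "nat \<Rightarrow> nat graph" where
  "path n = ({1..n}, \<lambda>a b. a + 1 = b \<or> b + 1 = a)"

definition delete_verts :: "'a graph \<Rightarrow> 'a set \<Rightarrow> 'a graph" where
  "delete_verts G D = (verts G - D, snd G)"

definition G_seq :: "nat \<Rightarrow> nat" where
  "G_seq n = num_tilings (cart_prod C4 (path n))"

definition g_seq :: "nat \<Rightarrow> nat" where
  "g_seq n = num_tilings (delete_verts (cart_prod C4 (path n)) {(0, 1), (1, 1)})"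

end

theory Submission
  imports Defs
begin

text \<open>
  Cover the corner (0, 1) of the end copy by each of its three dominoes, and then keep covering
  the first uncovered vertex of the end copy. The two horizontal choices leave the configuration
  of g(n), up to a rotation of C4. After the vertical choice, every branch ends with the end copy
  and an adjacent pair of layer 2 removed, or the end copy and all of layer 2 removed, that is
  g(n-1) up to rotation or G(n-2); hence G(n) = 2 g(n) + 2 g(n-1) + G(n-2). The same procedure
  gives g(n) = G(n-1) + g(n-1). Eliminating G, both sequences satisfy the linear recurrence with
  characteristic polynomial (x + 1)(x^2 - 4x + 1), and the roots -1, 2 + sqrt 3, 2 - sqrt 3
  together with g(1) = 1, g(2) = 3, g(3) = 12 give the closed form.
\<close>

section \<open>Perfect matchings\<close>

lemma insert_mem_edges_iff:
  "{a, b} \<in> edges G \<longleftrightarrow> a \<in> verts G \<and> b \<in> verts G \<and> a \<noteq> b \<and> (snd G a b \<or> snd G b a)"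
  unfolding edges_def verts_def by (auto simp: doubleton_eq_iff)

lemma edgesE:
  assumes "e \<in> edges G"
  obtains a b where "e = {a, b}" "a \<in> verts G" "b \<in> verts G" "a \<noteq> b" "snd G a b"
  using assms unfolding edges_def verts_def by auto

lemma edge_subset_verts: "e \<in> edges G \<Longrightarrow> e \<subseteq> verts G"
  by (erule edgesE) auto

lemma verts_delete_verts [simp]: "verts (delete_verts G D) = verts G - D"
  by (simp add: delete_verts_def verts_def)

lemma snd_delete_verts [simp]: "snd (delete_verts G D) = snd G"
  by (simp add: delete_verts_def)

lemma delete_verts_delete_verts: "delete_verts (delete_verts G D) E = delete_verts G (D \<union> E)"
  by (auto simp: delete_verts_def verts_def)

lemma delete_verts_empty: "delete_verts G {} = G"
  by (simp add: delete_verts_def verts_def)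

lemma edges_delete_verts: "edges (delete_verts G D) = {e \<in> edges G. e \<inter> D = {}}"
  unfolding edges_def delete_verts_def verts_def by auto

lemma perfect_matchingI:
  assumes "M \<subseteq> edges G"
    and "\<And>u. u \<in> verts G \<Longrightarrow> \<exists>e\<in>M. u \<in> e"
    and "\<And>u e e'. u \<in> verts G \<Longrightarrow> e \<in> M \<Longrightarrow> e' \<in> M \<Longrightarrow> u \<in> e \<Longrightarrow> u \<in> e' \<Longrightarrow> e = e'"
  shows "perfect_matching G M"
  unfolding perfect_matching_def using assms by (metis (no_types, lifting))

lemma perfect_matching_subset_edges: "perfect_matching G M \<Longrightarrow> M \<subseteq> edges G"
  unfolding perfect_matching_def by simp

lemma perfect_matching_covers: "perfect_matching G M \<Longrightarrow> u \<in> verts G \<Longrightarrow> \<exists>e\<in>M. u \<in> e"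
  unfolding perfect_matching_def by (metis (no_types, lifting))

lemma perfect_matching_unique:
  "perfect_matching G M \<Longrightarrow> u \<in> verts G \<Longrightarrow> e \<in> M \<Longrightarrow> u \<in> e \<Longrightarrow> e' \<in> M \<Longrightarrow> u \<in> e' \<Longrightarrow> e = e'"
  unfolding perfect_matching_def by (metis (no_types, lifting))

lemma finite_perfect_matchings:
  assumes "finite (verts G)"
  shows "finite {M. perfect_matching G M}"
proof -
  have "finite (edges G)"
    using assms edge_subset_verts by (blast intro: finite_subset[of _ "Pow (verts G)"])
  moreover have "{M. perfect_matching G M} \<subseteq> Pow (edges G)"
    using perfect_matching_subset_edges by blast
  ultimately show ?thesis using finite_subset by blast
qed

lemma num_tilings_no_verts:
  assumes "verts G = {}"
  shows "num_tilings G = 1"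
proof -
  have "edges G = {}" using assms by (auto elim: edgesE)
  then have "{M. perfect_matching G M} = {{}}"
    using assms unfolding perfect_matching_def by auto
  then show ?thesis unfolding num_tilings_def by simp
qed

lemma perfect_matching_delete_edge:
  assumes pm: "perfect_matching G M" and vw: "{v, w} \<in> M"
  shows "perfect_matching (delete_verts G {v, w}) (M - {{v, w}})"
proof (rule perfect_matchingI)
  have vw_verts: "v \<in> verts G" "w \<in> verts G"
    using vw pm perfect_matching_subset_edges edge_subset_verts by blast+
  have "e \<inter> {v, w} = {}" if "e \<in> M" "e \<noteq> {v, w}" for e
    using that perfect_matching_unique[OF pm vw_verts(1) vw] perfect_matching_unique[OF pm vw_verts(2) vw]
    by blast
  then show "M - {{v, w}} \<subseteq> edges (delete_verts G {v, w})"
    using perfect_matching_subset_edges[OF pm] by (auto simp: edges_delete_verts)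
next
  fix u assume "u \<in> verts (delete_verts G {v, w})"
  then show "\<exists>e\<in>M - {{v, w}}. u \<in> e"
    using perfect_matching_covers[OF pm] by fastforce
next
  fix u e e' assume "u \<in> verts (delete_verts G {v, w})" "e \<in> M - {{v, w}}" "e' \<in> M - {{v, w}}"
    "u \<in> e" "u \<in> e'"
  then show "e = e'" using perfect_matching_unique[OF pm] by auto
qed

lemma perfect_matching_insert_edge:
  assumes vw: "{v, w} \<in> edges G" and pm: "perfect_matching (delete_verts G {v, w}) M"
  shows "perfect_matching G (insert {v, w} M)"
proof (rule perfect_matchingI)
  have M: "M \<subseteq> edges G" and disj: "\<And>e. e \<in> M \<Longrightarrow> e \<inter> {v, w} = {}"
    using perfect_matching_subset_edges[OF pm] by (auto simp: edges_delete_verts)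
  show "insert {v, w} M \<subseteq> edges G" using M vw by blast
  fix u assume u: "u \<in> verts G"
  show "\<exists>e\<in>insert {v, w} M. u \<in> e"
    using u perfect_matching_covers[OF pm, of u] by auto
  fix e e' assume "e \<in> insert {v, w} M" "e' \<in> insert {v, w} M" "u \<in> e" "u \<in> e'"
  then show "e = e'"
    using u disj perfect_matching_unique[OF pm, of u e e'] by auto
qed

lemma bij_betw_perfect_matchings_containing_edge:
  assumes "{v, w} \<in> edges G"
  shows "bij_betw (\<lambda>M. M - {{v, w}}) {M. perfect_matching G M \<and> {v, w} \<in> M}
           {M. perfect_matching (delete_verts G {v, w}) M}"
proof (rule bij_betw_byWitness[where f' = "insert {v, w}"])
  have "{v, w} \<notin> M" if "perfect_matching (delete_verts G {v, w}) M" for M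
    using perfect_matching_subset_edges[OF that] by (auto simp: edges_delete_verts)
  then show "\<forall>M\<in>{M. perfect_matching (delete_verts G {v, w}) M}. insert {v, w} M - {{v, w}} = M"
    by auto
qed (auto intro: perfect_matching_delete_edge perfect_matching_insert_edge[OF assms])


lemma num_tilings_expand_vertex:
  assumes fin: "finite (verts G)" and v: "v \<in> verts G"
  shows "num_tilings G = (\<Sum>w\<in>{w. {v, w} \<in> edges G}. num_tilings (delete_verts G {v, w}))"
proof -
  let ?N = "{w. {v, w} \<in> edges G}"
  let ?A = "\<lambda>w. {M. perfect_matching G M \<and> {v, w} \<in> M}"
  have fin_N: "finite ?N"
    using insert_mem_edges_iff[of v _ G] by (intro finite_subset[OF _ fin]) blast
  have partition: "{M. perfect_matching G M} = (\<Union>w\<in>?N. ?A w)"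
  proof (intro set_eqI iffI)
    fix M assume "M \<in> {M. perfect_matching G M}"
    then have pm: "perfect_matching G M" by simp
    then obtain e where e: "e \<in> M" "v \<in> e" using perfect_matching_covers[OF _ v] by blast
    then have "e \<in> edges G" using pm perfect_matching_subset_edges by blast
    then obtain a b where "e = {a, b}" by (rule edgesE)
    then obtain w where "e = {v, w}" using e(2) by blast
    then show "M \<in> (\<Union>w\<in>?N. ?A w)" using e \<open>e \<in> edges G\<close> pm by auto
  qed auto
  have disjoint: "?A w \<inter> ?A w' = {}" if "w \<in> ?N" "w \<noteq> w'" for w w'
  proof -
    have "v \<noteq> w" using that(1) insert_mem_edges_iff[of v w G] by blast
    then have "{v, w} \<noteq> {v, w'}" using that(2) by (auto simp: doubleton_eq_iff)
    then show ?thesis using v perfect_matching_unique[of G _ v "{v, w}" "{v, w'}"] by blast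
  qed
  have fin_A: "finite (?A w)" for w
    using finite_perfect_matchings[OF fin] by (rule finite_subset[rotated]) blast
  have card_A: "card (?A w) = num_tilings (delete_verts G {v, w})" if "w \<in> ?N" for w
    unfolding num_tilings_def
    using bij_betw_perfect_matchings_containing_edge[of v w G] that bij_betw_same_card by blast
  have "num_tilings G = card (\<Union>w\<in>?N. ?A w)" unfolding num_tilings_def partition ..
  also have "\<dots> = (\<Sum>w\<in>?N. card (?A w))"
    using fin_N fin_A disjoint by (intro card_UN_disjoint) auto
  also have "\<dots> = (\<Sum>w\<in>?N. num_tilings (delete_verts G {v, w}))"
    using card_A by simp
  finally show ?thesis .
qed


lemma num_tilings_le_iso:
  assumes bij: "bij_betw f (verts G) (verts H)"
    and adj: "\<And>u v. u \<in> verts G \<Longrightarrow> v \<in> verts G \<Longrightarrow> snd H (f u) (f v) = snd G u v"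
    and fin: "finite (verts H)"
  shows "num_tilings G \<le> num_tilings H"
proof -
  let ?F = "\<lambda>M. (`) f ` M"
  have inj: "inj_on f (verts G)" using bij bij_betw_imp_inj_on by blast
  have "inj_on ((`) f) (Pow (verts G))" using inj inj_on_image_Pow by blast
  then have "inj_on ?F (Pow (Pow (verts G)))" using inj_on_image_Pow by blast
  moreover have "{M. perfect_matching G M} \<subseteq> Pow (Pow (verts G))"
    using perfect_matching_subset_edges edge_subset_verts by blast
  ultimately have inj_F: "inj_on ?F {M. perfect_matching G M}" using inj_on_subset by blast
  have edge_image: "f ` e \<in> edges H" if "e \<in> edges G" for e
  proof -
    obtain a b where ab: "e = {a, b}" "a \<in> verts G" "b \<in> verts G" "a \<noteq> b" "snd G a b"
      using \<open>e \<in> edges G\<close> by (rule edgesE)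
    have "f a \<in> verts H" "f b \<in> verts H" using ab bij bij_betw_apply by metis+
    moreover have "f a \<noteq> f b" using ab inj inj_on_def by metis
    moreover have "snd H (f a) (f b)" using ab adj by blast
    ultimately show ?thesis using ab insert_mem_edges_iff[of "f a" "f b" H] by simp
  qed
  have "perfect_matching H (?F M)" if pm: "perfect_matching G M" for M
  proof (rule perfect_matchingI)
    show "?F M \<subseteq> edges H" using edge_image perfect_matching_subset_edges[OF pm] by blast
  next
    fix x assume "x \<in> verts H"
    then obtain u where u: "u \<in> verts G" "x = f u" using bij bij_betw_imp_surj_on by blast
    then obtain e where "e \<in> M" "u \<in> e" using perfect_matching_covers[OF pm] by blast
    then show "\<exists>e\<in>?F M. x \<in> e" using u by blast
  next
    fix x e e' assume "x \<in> verts H" "e \<in> ?F M" "e' \<in> ?F M" "x \<in> e" "x \<in> e'"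
    then obtain d d' a a' where dd: "d \<in> M" "d' \<in> M" "e = f ` d" "e' = f ` d'"
      and aa: "a \<in> d" "a' \<in> d'" "x = f a" "x = f a'" by blast
    have "d \<subseteq> verts G" "d' \<subseteq> verts G"
      using dd perfect_matching_subset_edges[OF pm] edge_subset_verts by blast+
    then have "a = a'" using aa inj inj_on_def by (metis subsetD)
    then have "d = d'" using perfect_matching_unique[OF pm] aa dd \<open>d \<subseteq> verts G\<close> by blast
    then show "e = e'" using dd by simp
  qed
  then have "?F ` {M. perfect_matching G M} \<subseteq> {M. perfect_matching H M}" by blast
  then show ?thesis
    unfolding num_tilings_def using card_inj_on_le[OF inj_F _ finite_perfect_matchings[OF fin]] by blast
qed

lemma num_tilings_iso:
  assumes bij: "bij_betw f (verts G) (verts H)"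
    and adj: "\<And>u v. u \<in> verts G \<Longrightarrow> v \<in> verts G \<Longrightarrow> snd H (f u) (f v) = snd G u v"
    and fin: "finite (verts H)"
  shows "num_tilings G = num_tilings H"
proof (rule antisym)
  show "num_tilings G \<le> num_tilings H" by (rule num_tilings_le_iso[OF bij adj fin])
  let ?g = "inv_into (verts G) f"
  have bij': "bij_betw ?g (verts H) (verts G)" using bij bij_betw_inv_into by blast
  have fin': "finite (verts G)" using bij fin bij_betw_finite by blast
  have adj': "snd G (?g x) (?g y) = snd H x y" if "x \<in> verts H" "y \<in> verts H" for x y
  proof -
    have "?g x \<in> verts G" "?g y \<in> verts G" using that bij' bij_betw_apply by metis+
    moreover have "f (?g x) = x" "f (?g y) = y"
      using that bij bij_betw_imp_surj_on f_inv_into_f by metis+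
    ultimately show ?thesis using adj by metis
  qed
  show "num_tilings H \<le> num_tilings G" by (rule num_tilings_le_iso[OF bij' adj' fin'])
qed

section \<open>The prism C4 \<times> P_n with deleted vertices\<close>

definition prism_del :: "nat \<Rightarrow> (nat \<times> nat) set \<Rightarrow> (nat \<times> nat) graph" where
  "prism_del n D = delete_verts (cart_prod C4 (path n)) D"

lemma G_seq_eq: "G_seq n = num_tilings (prism_del n {})"
  by (simp add: G_seq_def prism_del_def delete_verts_empty)

lemma g_seq_eq: "g_seq n = num_tilings (prism_del n {(0, 1), (1, 1)})"
  by (simp add: g_seq_def prism_del_def)

lemma mem_verts_prism_del:
  "(a, i) \<in> verts (prism_del n D) \<longleftrightarrow> (a, i) \<notin> D \<and> a < 4 \<and> 1 \<le> i \<and> i \<le> n"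
  by (auto simp: prism_del_def delete_verts_def cart_prod_def verts_def C4_def path_def)

lemma finite_verts_prism_del: "finite (verts (prism_del n D))"
  by (rule finite_subset[of _ "{0..<4} \<times> {1..n}"]) (auto simp: mem_verts_prism_del)

lemma snd_prism_del:
  "snd (prism_del n D) (a, i) (b, j) \<longleftrightarrow> snd C4 a b \<and> i = j \<or> a = b \<and> (i + 1 = j \<or> j + 1 = i)"
  by (simp add: prism_del_def cart_prod_def path_def)

lemma nat_less_4_cases: "(a::nat) < 4 \<Longrightarrow> a = 0 \<or> a = 1 \<or> a = 2 \<or> a = 3"
  by arith

lemma C4_adj_iff:
  assumes "a < 4" "b < 4"
  shows "snd C4 a b \<or> snd C4 b a \<longleftrightarrow> (a, b) \<in> {(0,1),(1,0),(1,2),(2,1),(2,3),(3,2),(3,0),(0,3)}"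
  using nat_less_4_cases[OF assms(1)] nat_less_4_cases[OF assms(2)]
  by (elim disjE) (simp_all add: C4_def)

lemma insert_mem_edges_prism_del_iff:
  "{(a, i), (b, j)} \<in> edges (prism_del n D) \<longleftrightarrow>
     (a, i) \<notin> D \<and> (b, j) \<notin> D \<and> a < 4 \<and> b < 4 \<and> 1 \<le> i \<and> i \<le> n \<and> 1 \<le> j \<and> j \<le> n \<and>
     ((a, b) \<in> {(0,1),(1,0),(1,2),(2,1),(2,3),(3,2),(3,0),(0,3)} \<and> i = j \<or>
      a = b \<and> (i + 1 = j \<or> j + 1 = i))"
proof (cases "a < 4 \<and> b < 4")
  let ?adj = "(a, b) \<in> {(0,1),(1,0),(1,2),(2,1),(2,3),(3,2),(3,0),(0,3)} \<and> i = j \<or>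
      a = b \<and> (i + 1 = j \<or> j + 1 = i)"
  case True
  then have "snd C4 a b \<or> snd C4 b a \<longleftrightarrow> (a, b) \<in> {(0,1),(1,0),(1,2),(2,1),(2,3),(3,2),(3,0),(0,3)}"
    by (intro C4_adj_iff) auto
  then have "(snd C4 a b \<and> i = j \<or> a = b \<and> (i + 1 = j \<or> j + 1 = i)) \<or>
      (snd C4 b a \<and> j = i \<or> b = a \<and> (j + 1 = i \<or> i + 1 = j)) \<longleftrightarrow> ?adj"
    by argo
  moreover have "?adj \<Longrightarrow> (a, i) \<noteq> (b, j)" by auto
  ultimately show ?thesis
    unfolding insert_mem_edges_iff mem_verts_prism_del snd_prism_del using True by argo
qed (auto simp: insert_mem_edges_iff mem_verts_prism_del)

text \<open>
  Simplification turns D \<union> {v, w} into a set listing v and w first; the deleted sets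
  in the expansions below are written in that order so that no reordering is needed.
\<close>

lemma num_tilings_prism_del_expand:
  assumes "v \<in> verts (prism_del n D)" and "{w. {v, w} \<in> edges (prism_del n D)} = W"
  shows "num_tilings (prism_del n D) = (\<Sum>w\<in>W. num_tilings (prism_del n (D \<union> {v, w})))"
  using num_tilings_expand_vertex[OF finite_verts_prism_del assms(1)] assms(2)
  by (simp add: prism_del_def delete_verts_delete_verts)

lemma num_tilings_prism_del_drop_layer:
  assumes "n \<ge> 1"
  shows "num_tilings (prism_del n ({0..<4} \<times> {1} \<union> T \<times> {2})) = num_tilings (prism_del (n - 1) (T \<times> {1}))"
proof (rule num_tilings_iso)
  let ?V = "verts (prism_del n ({0..<4} \<times> {1} \<union> T \<times> {2}))"
  show "bij_betw (apsnd (\<lambda>i. i - 1)) ?V (verts (prism_del (n - 1) (T \<times> {1})))"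
    by (rule bij_betw_byWitness[where f' = "apsnd Suc"]) (auto simp: mem_verts_prism_del)
  show "snd (prism_del (n - 1) (T \<times> {1})) (apsnd (\<lambda>i. i - 1) u) (apsnd (\<lambda>i. i - 1) v) =
        snd (prism_del n ({0..<4} \<times> {1} \<union> T \<times> {2})) u v" if "u \<in> ?V" "v \<in> ?V" for u v
    using that by (cases u, cases v) (auto simp: mem_verts_prism_del snd_prism_del)
qed (rule finite_verts_prism_del)

lemma num_tilings_prism_del_first_layer:
  assumes "n \<ge> 1"
  shows "num_tilings (prism_del n ({0..<4} \<times> {1})) = G_seq (n - 1)"
  using num_tilings_prism_del_drop_layer[OF assms, of "{}"] by (simp add: G_seq_eq)

lemma num_tilings_prism_del_C4_automorphism:
  assumes bij: "bij_betw \<sigma> {0..<4} {0..<4}"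
    and adj: "\<And>a b. a < 4 \<Longrightarrow> b < 4 \<Longrightarrow> snd C4 (\<sigma> a) (\<sigma> b) = snd C4 a b"
    and D: "D \<subseteq> {0..<4} \<times> UNIV"
  shows "num_tilings (prism_del n (apfst \<sigma> ` D)) = num_tilings (prism_del n D)"
proof (rule num_tilings_iso[symmetric])
  let ?V = "{0..<4} \<times> {1..n}"
  have verts: "verts (prism_del n E) = ?V - E" for E
    by (auto simp: mem_verts_prism_del)
  have inj: "inj_on (apfst \<sigma>) ({0..<4} \<times> UNIV)"
    using bij_betw_imp_inj_on[OF bij] by (auto simp: inj_on_def)
  have "apfst \<sigma> ` (?V - D) = apfst \<sigma> ` ?V - apfst \<sigma> ` D"
    using D by (intro inj_on_image_set_diff[OF inj]) auto
  moreover have "apfst \<sigma> ` ?V = ?V"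
    using bij_betw_imp_surj_on[OF bij] by (auto simp: apfst_def map_prod_surj_on)
  moreover have "inj_on (apfst \<sigma>) (?V - D)"
    using inj by (rule inj_on_subset) auto
  ultimately show "bij_betw (apfst \<sigma>) (verts (prism_del n D)) (verts (prism_del n (apfst \<sigma> ` D)))"
    unfolding verts bij_betw_def by simp
  show "snd (prism_del n (apfst \<sigma> ` D)) (apfst \<sigma> u) (apfst \<sigma> v) = snd (prism_del n D) u v"
    if "u \<in> verts (prism_del n D)" "v \<in> verts (prism_del n D)" for u v
    using that adj bij_betw_imp_inj_on[OF bij]
    by (cases u, cases v) (auto simp: mem_verts_prism_del snd_prism_del inj_on_eq_iff)
qed (rule finite_verts_prism_del)

lemma num_tilings_prism_del_rotate:
  assumes "D \<subseteq> {0..<4} \<times> UNIV"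
  shows "num_tilings (prism_del n (apfst (\<lambda>a. (a + 1) mod 4) ` D)) = num_tilings (prism_del n D)"
proof (rule num_tilings_prism_del_C4_automorphism[OF _ _ assms])
  have "inj_on (\<lambda>a. (a + 1) mod 4) {0..<4::nat}"
    unfolding inj_on_def by (auto dest!: nat_less_4_cases)
  moreover have "(\<lambda>a. (a + 1) mod 4) ` {0..<4} \<subseteq> {0..<4::nat}" by auto
  ultimately show "bij_betw (\<lambda>a. (a + 1) mod 4) {0..<4} {0..<4::nat}"
    unfolding bij_betw_def by (simp add: endo_inj_surj)
  show "snd C4 ((a + 1) mod 4) ((b + 1) mod 4) = snd C4 a b" if "a < 4" "b < 4" for a b
    using nat_less_4_cases[OF that(1)] nat_less_4_cases[OF that(2)]
    by (elim disjE) (simp_all add: C4_def)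
qed

lemma num_tilings_prism_del_03: "num_tilings (prism_del n {(0, 1), (3, 1)}) = g_seq n"
  using num_tilings_prism_del_rotate[of "{(0, 1), (3, 1)}" n] by (simp add: g_seq_eq insert_commute)

lemma num_tilings_prism_del_23: "num_tilings (prism_del n {(2, 1), (3, 1)}) = g_seq n"
  using num_tilings_prism_del_rotate[of "{(2, 1), (3, 1)}" n] num_tilings_prism_del_03
  by (simp add: insert_commute)

section \<open>Recurrences\<close>

lemma num_tilings_prism_del_vertical_horizontal:
  assumes n: "n \<ge> 2"
  shows "num_tilings (prism_del n {(1,1),(2,1),(0,1),(0,2)}) = g_seq (n - 1)"
proof -
  have "num_tilings (prism_del n {(1,1),(2,1),(0,1),(0,2)}) =
        num_tilings (prism_del n {(3,1),(3,2),(1,1),(2,1),(0,1),(0,2)})"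
    using n by (subst num_tilings_prism_del_expand[of "(3,1)" _ _ "{(3,2)}"])
      (auto simp: mem_verts_prism_del insert_mem_edges_prism_del_iff)
  also have "{(3,1),(3,2),(1,1),(2,1),(0,1),(0,2)} = {0..<4} \<times> {1} \<union> {0,3::nat} \<times> {2::nat}"
    by (auto dest: nat_less_4_cases)
  also have "num_tilings (prism_del n \<dots>) = num_tilings (prism_del (n - 1) ({0,3} \<times> {1}))"
    using n by (intro num_tilings_prism_del_drop_layer) simp
  also have "{0,3::nat} \<times> {1::nat} = {(0,1),(3,1)}"
    by auto
  finally show ?thesis
    unfolding num_tilings_prism_del_03 .
qed

lemma num_tilings_prism_del_three_vertical:
  assumes n: "n \<ge> 2"
  shows "num_tilings (prism_del n {(2,1),(2,2),(1,1),(1,2),(0,1),(0,2)}) = G_seq (n - 2)"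
proof -
  have "num_tilings (prism_del n {(2,1),(2,2),(1,1),(1,2),(0,1),(0,2)}) =
        num_tilings (prism_del n {(3,1),(3,2),(2,1),(2,2),(1,1),(1,2),(0,1),(0,2)})"
    using n by (subst num_tilings_prism_del_expand[of "(3,1)" _ _ "{(3,2)}"])
      (auto simp: mem_verts_prism_del insert_mem_edges_prism_del_iff)
  also have "{(3,1),(3,2),(2,1),(2,2),(1,1),(1,2),(0,1),(0,2)} = {0..<4} \<times> {1} \<union> {0..<4::nat} \<times> {2::nat}"
    by (auto dest: nat_less_4_cases)
  also have "num_tilings (prism_del n \<dots>) = num_tilings (prism_del (n - 1) ({0..<4} \<times> {1}))"
    using n by (intro num_tilings_prism_del_drop_layer) simp
  also have "\<dots> = G_seq (n - 2)"
    using n by (subst num_tilings_prism_del_first_layer) (simp_all add: numeral_2_eq_2)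
  finally show ?thesis .
qed

lemma num_tilings_prism_del_two_vertical:
  assumes n: "n \<ge> 2"
  shows "num_tilings (prism_del n {(1,1),(1,2),(0,1),(0,2)}) = g_seq (n - 1) + G_seq (n - 2)"
proof -
  have "num_tilings (prism_del n {(1,1),(1,2),(0,1),(0,2)}) =
        num_tilings (prism_del n {(2,1),(3,1),(1,1),(1,2),(0,1),(0,2)}) +
        num_tilings (prism_del n {(2,1),(2,2),(1,1),(1,2),(0,1),(0,2)})"
    using n by (subst num_tilings_prism_del_expand[of "(2,1)" _ _ "{(3,1),(2,2)}"])
      (auto simp: mem_verts_prism_del insert_mem_edges_prism_del_iff)
  also have "num_tilings (prism_del n {(2,1),(3,1),(1,1),(1,2),(0,1),(0,2)}) = g_seq (n - 1)"
  proof -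
    have "{(2,1),(3,1),(1,1),(1,2),(0,1),(0,2)} = {0..<4} \<times> {1} \<union> {0,1::nat} \<times> {2::nat}"
      by (auto dest: nat_less_4_cases)
    moreover have "{0,1::nat} \<times> {1::nat} = {(0,1),(1,1)}"
      by auto
    ultimately show ?thesis
      using n num_tilings_prism_del_drop_layer[of n "{0,1}"] by (simp only: g_seq_eq)
  qed
  finally show ?thesis
    unfolding num_tilings_prism_del_three_vertical[OF n] .
qed

lemma num_tilings_prism_del_vertical:
  assumes n: "n \<ge> 2"
  shows "num_tilings (prism_del n {(0,1),(0,2)}) = 2 * g_seq (n - 1) + G_seq (n - 2)"
proof -
  have "num_tilings (prism_del n {(0,1),(0,2)}) =
        num_tilings (prism_del n {(1,1),(2,1),(0,1),(0,2)}) +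
        num_tilings (prism_del n {(1,1),(1,2),(0,1),(0,2)})"
    using n by (subst num_tilings_prism_del_expand[of "(1,1)" _ _ "{(2,1),(1,2)}"])
      (auto simp: mem_verts_prism_del insert_mem_edges_prism_del_iff)
  then show ?thesis
    using num_tilings_prism_del_vertical_horizontal[OF n] num_tilings_prism_del_two_vertical[OF n]
    by simp
qed

lemma G_seq_expansion:
  assumes n: "n \<ge> 2"
  shows "G_seq n = 2 * g_seq n + 2 * g_seq (n - 1) + G_seq (n - 2)"
proof -
  have "G_seq n = num_tilings (prism_del n {(0,1),(1,1)}) + num_tilings (prism_del n {(0,1),(3,1)}) +
                  num_tilings (prism_del n {(0,1),(0,2)})"
    unfolding G_seq_eq
    using n by (subst num_tilings_prism_del_expand[of "(0,1)" _ _ "{(1,1),(3,1),(0,2)}"])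
      (auto simp: mem_verts_prism_del insert_mem_edges_prism_del_iff)
  then show ?thesis
    using num_tilings_prism_del_vertical[OF n] num_tilings_prism_del_03[of n] g_seq_eq[of n] by linarith
qed

lemma g_seq_rec:
  assumes n: "n \<ge> 2"
  shows "g_seq n = G_seq (n - 1) + g_seq (n - 1)"
proof -
  have "g_seq n = num_tilings (prism_del n {(2,1),(3,1),(0,1),(1,1)}) +
                  num_tilings (prism_del n {(2,1),(2,2),(0,1),(1,1)})"
    unfolding g_seq_eq
    using n by (subst num_tilings_prism_del_expand[of "(2,1)" _ _ "{(3,1),(2,2)}"])
      (auto simp: mem_verts_prism_del insert_mem_edges_prism_del_iff)
  also have "num_tilings (prism_del n {(2,1),(3,1),(0,1),(1,1)}) = G_seq (n - 1)"
  proof -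
    have "{(2,1),(3,1),(0,1),(1,1)} = {0..<4::nat} \<times> {1::nat}"
      by (auto dest: nat_less_4_cases)
    then show ?thesis
      using n num_tilings_prism_del_first_layer by simp
  qed
  also have "num_tilings (prism_del n {(2,1),(2,2),(0,1),(1,1)}) = g_seq (n - 1)"
  proof -
    have "num_tilings (prism_del n {(2,1),(2,2),(0,1),(1,1)}) =
          num_tilings (prism_del n {(3,1),(3,2),(2,1),(2,2),(0,1),(1,1)})"
      using n by (subst num_tilings_prism_del_expand[of "(3,1)" _ _ "{(3,2)}"])
        (auto simp: mem_verts_prism_del insert_mem_edges_prism_del_iff)
    also have "{(3,1),(3,2),(2,1),(2,2),(0,1),(1,1)} = {0..<4} \<times> {1} \<union> {2,3::nat} \<times> {2::nat}"
      by (auto dest: nat_less_4_cases)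
    also have "num_tilings (prism_del n \<dots>) = num_tilings (prism_del (n - 1) ({2,3} \<times> {1}))"
      using n by (intro num_tilings_prism_del_drop_layer) simp
    also have "{2,3::nat} \<times> {1::nat} = {(2,1),(3,1)}"
      by auto
    finally show ?thesis
      unfolding num_tilings_prism_del_23 .
  qed
  finally show ?thesis .
qed

lemma G_seq_0: "G_seq 0 = 1"
  unfolding G_seq_eq by (rule num_tilings_no_verts) (auto simp: mem_verts_prism_del)

lemma g_seq_1: "g_seq 1 = 1"
proof -
  have "g_seq 1 = num_tilings (prism_del 1 {(2,1),(3,1),(0,1),(1,1)})"
    unfolding g_seq_eq
    by (subst num_tilings_prism_del_expand[of "(2,1)" _ _ "{(3,1)}"])
      (auto simp: mem_verts_prism_del insert_mem_edges_prism_del_iff)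
  also have "{(2,1),(3,1),(0,1),(1,1)} = {0..<4::nat} \<times> {1::nat}"
    by (auto dest: nat_less_4_cases)
  finally show ?thesis
    using num_tilings_prism_del_first_layer[of 1] G_seq_0 by simp
qed

lemma G_seq_1: "G_seq 1 = 2"
proof -
  have "G_seq 1 = num_tilings (prism_del 1 {(0,1),(1,1)}) + num_tilings (prism_del 1 {(0,1),(3,1)})"
    unfolding G_seq_eq
    by (subst num_tilings_prism_del_expand[of "(0,1)" _ _ "{(1,1),(3,1)}"])
      (auto simp: mem_verts_prism_del insert_mem_edges_prism_del_iff)
  then show ?thesis
    using g_seq_1 num_tilings_prism_del_03[of 1] g_seq_eq[of 1] by linarith
qed

lemma G_seq_rec:
  assumes "n \<ge> 2"
  shows "G_seq n = 2 * G_seq (n - 1) + G_seq (n - 2) + 4 * g_seq (n - 1)"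
  using G_seq_expansion[OF assms] g_seq_rec[OF assms] by simp

lemma G_seq_rec3:
  assumes "n \<ge> 3"
  shows "int (G_seq n) = 3 * int (G_seq (n - 1)) + 3 * int (G_seq (n - 2)) - int (G_seq (n - 3))"
proof -
  have i: "n - 1 - 1 = n - 2" "n - 1 - 2 = n - 3" by arith+
  have n1: "n - 1 \<ge> 2" using assms by arith
  show ?thesis
    using G_seq_rec[OF n1, unfolded i] g_seq_rec[OF n1, unfolded i] G_seq_rec[of n] assms by linarith
qed

lemma g_seq_rec3:
  assumes "n \<ge> 4"
  shows "int (g_seq n) = 3 * int (g_seq (n - 1)) + 3 * int (g_seq (n - 2)) - int (g_seq (n - 3))"
proof -
  have i: "n - 1 - 1 = n - 2" "n - 1 - 2 = n - 3" "n - 2 - 1 = n - 3" by arith+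
  have n1: "n - 1 \<ge> 2" and n2: "n - 2 \<ge> 2" using assms by arith+
  show ?thesis
    using G_seq_rec[OF n1, unfolded i] g_seq_rec[OF n1, unfolded i] g_seq_rec[OF n2, unfolded i]
      g_seq_rec[of n] assms by linarith
qed

section \<open>The closed form\<close>

lemma linear_rec3_unique:
  fixes x y :: "nat \<Rightarrow> 'a::comm_ring"
  assumes "\<And>n. n \<ge> k + 3 \<Longrightarrow> x n = a * x (n - 1) + b * x (n - 2) + c * x (n - 3)"
    and "\<And>n. n \<ge> k + 3 \<Longrightarrow> y n = a * y (n - 1) + b * y (n - 2) + c * y (n - 3)"
    and "x k = y k" "x (k + 1) = y (k + 1)" "x (k + 2) = y (k + 2)"
    and "n \<ge> k"
  shows "x n = y n"
  using \<open>n \<ge> k\<close>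
proof (induction n rule: less_induct)
  case (less n)
  show ?case
  proof (cases "n \<ge> k + 3")
    case True
    then show ?thesis
      using assms(1,2)[OF True] less.IH[of "n - 1"] less.IH[of "n - 2"] less.IH[of "n - 3"] by simp
  next
    case False
    then have "n = k \<or> n = k + 1 \<or> n = k + 2" using less.prems by arith
    then show ?thesis using assms(3-5) by auto
  qed
qed

lemma power_rec3_of_root:
  fixes x :: real
  assumes "(x + 1) * (x\<^sup>2 - 4 * x + 1) = 0" and "n \<ge> 3"
  shows "x ^ n = 3 * x ^ (n - 1) + 3 * x ^ (n - 2) - x ^ (n - 3)"
proof -
  obtain m where n: "n = m + 3" using \<open>n \<ge> 3\<close> le_iff_add by (metis add.commute)
  have cube: "x ^ 3 = 3 * x\<^sup>2 + 3 * x - 1"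
    using assms(1) by (simp add: algebra_simps power2_eq_square power3_eq_cube)
  have "x ^ (m + 3) = x ^ m * x ^ 3" by (rule power_add)
  also have "\<dots> = 3 * x ^ (m + 2) + 3 * x ^ (m + 1) - x ^ m"
    unfolding cube by (simp add: power_add algebra_simps power2_eq_square)
  finally show ?thesis
    unfolding n by simp
qed

definition g_closed :: "nat \<Rightarrow> real" where
  "g_closed n = ((1 + sqrt 3) * (2 + sqrt 3) ^ n + (1 - sqrt 3) * (2 - sqrt 3) ^ n) / 12 - (-1) ^ n / 6"

lemma g_closed_rec3:
  assumes "n \<ge> 3"
  shows "g_closed n = 3 * g_closed (n - 1) + 3 * g_closed (n - 2) + (-1) * g_closed (n - 3)"
proof -
  have "(2 + sqrt 3 + 1) * ((2 + sqrt 3)\<^sup>2 - 4 * (2 + sqrt 3) + 1) = (0::real)"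
    "(2 - sqrt 3 + 1) * ((2 - sqrt 3)\<^sup>2 - 4 * (2 - sqrt 3) + 1) = (0::real)"
    "(-1 + 1) * ((-1)\<^sup>2 - 4 * (-1) + 1) = (0::real)"
    by (simp_all add: power2_eq_square algebra_simps)
  note roots = this[THEN power_rec3_of_root, OF assms]
  show ?thesis
    unfolding g_closed_def roots by (simp add: field_simps)
qed

lemma g_closed_1: "g_closed 1 = 1"
  by (simp add: g_closed_def algebra_simps)

lemma g_closed_2: "g_closed 2 = 3"
  by (simp add: g_closed_def power2_eq_square algebra_simps)

lemma g_closed_3: "g_closed 3 = 12"
  by (simp add: g_closed_def power3_eq_cube algebra_simps)

lemma g_seq_closed_form:
  assumes "n \<ge> 1"
  shows "real (g_seq n) = g_closed n"
proof (rule linear_rec3_unique[where k = 1 and a = 3 and b = 3 and c = "-1"])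
  show "real (g_seq n) = 3 * real (g_seq (n - 1)) + 3 * real (g_seq (n - 2)) + -1 * real (g_seq (n - 3))"
    if "n \<ge> 1 + 3" for n
    using arg_cong[OF g_seq_rec3[of n], of real_of_int] that by simp
  have "g_seq 2 = 3" "g_seq 3 = 12"
    using g_seq_rec[of 2] g_seq_rec[of 3] G_seq_rec[of 2] G_seq_0 G_seq_1 g_seq_1 by simp_all
  then show "real (g_seq 1) = g_closed 1" "real (g_seq (1 + 1)) = g_closed (1 + 1)"
    "real (g_seq (1 + 2)) = g_closed (1 + 2)"
    using g_seq_1 g_closed_1 g_closed_2 g_closed_3 by (simp_all add: numeral_2_eq_2 numeral_3_eq_3)
  show "g_closed n = 3 * g_closed (n - 1) + 3 * g_closed (n - 2) + -1 * g_closed (n - 3)"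
    if "n \<ge> 1 + 3" for n
    using g_closed_rec3 that by simp
qed (rule assms)

theorem mainTheorem2:
  shows "(\<forall>n\<ge>3. G_seq n = 2 * G_seq (n - 1) + G_seq (n - 2) + 4 * g_seq (n - 1))
       \<and> (\<forall>n\<ge>2. g_seq n = G_seq (n - 1) + g_seq (n - 1))
       \<and> (\<forall>n\<ge>4. int (G_seq n) = 3 * int (G_seq (n - 1)) + 3 * int (G_seq (n - 2)) - int (G_seq (n - 3)))
       \<and> (\<forall>n\<ge>4. int (g_seq n) = 3 * int (g_seq (n - 1)) + 3 * int (g_seq (n - 2)) - int (g_seq (n - 3)))
       \<and> (\<forall>n\<ge>1. real (g_seq n) =
            ((1 + sqrt 3) * (2 + sqrt 3) ^ n + (1 - sqrt 3) * (2 - sqrt 3) ^ n) / 12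
            - (-1) ^ n / 6)"
  by (intro conjI allI impI G_seq_rec g_seq_rec G_seq_rec3 g_seq_rec3
      g_seq_closed_form[unfolded g_closed_def]) simp_all

end
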